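(* Let $K\in\{\mathbb R,\mathbb C,\mathbb H\}$ and let $(E,d)$ be a metric vector space over $K$ such that $d$ is $C_0$-translation invariant and $(C_1,C_2,C_3)$-lipschitz multiplicative. Let $d_0(x,y)=\int_{\mathbb U}d(ux,uy)\,d\mu(u)$, $\delta(x,y)=\lim_{n\to\infty}\frac1n d(nx,ny)$, $\delta_0(x,y)=\lim_{n\to\infty}\frac1n d_0(nx,ny)$. Let (i) $E_0=\{x\in E:\ \delta(ux,0)=0\text{ for all }u\in\mathbb U\}$; (ii) $E_1=\{x\in E:\delta_0(x,0)=0\}$; (iii) $E_2$ the maximal linear subspace of $E$ on which $d_0$ is bounded; (iv) $E_3$ the maximal linear subspace of $E$ on which $d$ is bounded. Then $E_0=E_1=E_2=E_3$.
   Context: A metric vector space is a topological vector space over $K$ whose topology is generated by the metric $d$. $\mathbb U=\{u\in K:|u|=1\}$, $\mu$ the right-invariant Haar probability measure on $\mathbb U$. $d$ is $C_0$-translation invariant if $d(x+z,y+z)\le d(x,y)+C_0$ for all $x,y,z$. $(C_1,C_2,C_3)$-lipschitz multiplicative ($C_1\ge1$, $C_2,C_3\ge0$) means $C_1^{-1}|\lambda|d(x,y)-C_2|\lambda|-C_3\le d(\lambda x,\lambda y)\le C_1|\lambda|d(x,y)+C_2|\lambda|+C_3$ for all $\lambda\in K$, $x,y\in E$. A distance $\rho$ is bounded on a set $A$ if $\sup_{x,y\in A}\rho(x,y)<\infty$. (Under these hypotheses the limits defining $\delta,\delta_0$ exist.) *)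

theory Defs
  imports "HOL-Probability.Probability"
begin

text \<open>The scalar field K is a type 'k of class real_normed_div_algebra and euclidean_space:
  a finite-dimensional associative real normed division algebra with Euclidean norm,
  i.e. (up to isomorphism) exactly R, C or H.\<close>

definition unit_sphere :: "'k::real_normed_div_algebra set" where
  "unit_sphere = {u. norm u = 1}"

definition left_vector_space :: "('k::real_normed_div_algebra \<Rightarrow> 'e::ab_group_add \<Rightarrow> 'e) \<Rightarrow> bool" where
  "left_vector_space sm \<longleftrightarrow>
     (\<forall>a x y. sm a (x + y) = sm a x + sm a y) \<and>
     (\<forall>a b x. sm (a + b) x = sm a x + sm b x) \<and>
     (\<forall>a b x. sm (a * b) x = sm a (sm b x)) \<and>
     (\<forall>x. sm 1 x = x)"

definition is_metric :: "('e \<Rightarrow> 'e \<Rightarrow> real) \<Rightarrow> bool" where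
  "is_metric d \<longleftrightarrow>
     (\<forall>x y. 0 \<le> d x y) \<and> (\<forall>x y. d x y = 0 \<longleftrightarrow> x = y) \<and>
     (\<forall>x y. d x y = d y x) \<and> (\<forall>x y z. d x z \<le> d x y + d y z)"

definition metric_vector_space ::
  "('k::real_normed_div_algebra \<Rightarrow> 'e::ab_group_add \<Rightarrow> 'e) \<Rightarrow> ('e \<Rightarrow> 'e \<Rightarrow> real) \<Rightarrow> bool" where
  "metric_vector_space sm d \<longleftrightarrow>
     left_vector_space sm \<and> is_metric d \<and>
     (\<forall>x y. \<forall>e>0. \<exists>r>0. \<forall>x' y'. d x x' < r \<and> d y y' < r \<longrightarrow> d (x + y) (x' + y') < e) \<and>
     (\<forall>a x. \<forall>e>0. \<exists>r>0. \<forall>a' x'. norm (a - a') < r \<and> d x x' < r \<longrightarrow> d (sm a x) (sm a' x') < e)"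

definition translation_invariant :: "real \<Rightarrow> ('e::ab_group_add \<Rightarrow> 'e \<Rightarrow> real) \<Rightarrow> bool" where
  "translation_invariant C0 d \<longleftrightarrow> (\<forall>x y z. d (x + z) (y + z) \<le> d x y + C0)"

definition lipschitz_multiplicative ::
  "real \<Rightarrow> real \<Rightarrow> real \<Rightarrow> ('k::real_normed_div_algebra \<Rightarrow> 'e \<Rightarrow> 'e) \<Rightarrow> ('e \<Rightarrow> 'e \<Rightarrow> real) \<Rightarrow> bool" where
  "lipschitz_multiplicative C1 C2 C3 sm d \<longleftrightarrow>
     C1 \<ge> 1 \<and> C2 \<ge> 0 \<and> C3 \<ge> 0 \<and>
     (\<forall>l x y. d x y * norm l / C1 - C2 * norm l - C3 \<le> d (sm l x) (sm l y) \<and>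
              d (sm l x) (sm l y) \<le> C1 * norm l * d x y + C2 * norm l + C3)"

definition right_haar_prob :: "'k::{real_normed_div_algebra, euclidean_space} measure \<Rightarrow> bool" where
  "right_haar_prob \<mu> \<longleftrightarrow>
     prob_space \<mu> \<and> space \<mu> = unit_sphere \<and>
     sets \<mu> = sets (restrict_space borel unit_sphere) \<and>
     (\<forall>v\<in>unit_sphere. distr \<mu> \<mu> (\<lambda>u. u * v) = \<mu>)"

definition avg_dist ::
  "'k::{real_normed_div_algebra, euclidean_space} measure \<Rightarrow> ('k \<Rightarrow> 'e \<Rightarrow> 'e) \<Rightarrow> ('e \<Rightarrow> 'e \<Rightarrow> real) \<Rightarrow> 'e \<Rightarrow> 'e \<Rightarrow> real" where
  "avg_dist \<mu> sm d x y = (\<integral>u. d (sm u x) (sm u y) \<partial>\<mu>)"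

definition asymp_dist ::
  "('k::real_normed_div_algebra \<Rightarrow> 'e \<Rightarrow> 'e) \<Rightarrow> ('e \<Rightarrow> 'e \<Rightarrow> real) \<Rightarrow> 'e \<Rightarrow> 'e \<Rightarrow> real" where
  "asymp_dist sm \<rho> x y = lim (\<lambda>n. \<rho> (sm (of_nat n) x) (sm (of_nat n) y) / real n)"

definition linear_subspace :: "('k::real_normed_div_algebra \<Rightarrow> 'e::ab_group_add \<Rightarrow> 'e) \<Rightarrow> 'e set \<Rightarrow> bool" where
  "linear_subspace sm S \<longleftrightarrow> 0 \<in> S \<and> (\<forall>x\<in>S. \<forall>y\<in>S. x + y \<in> S) \<and> (\<forall>a. \<forall>x\<in>S. sm a x \<in> S)"

definition dist_bounded_on :: "('e \<Rightarrow> 'e \<Rightarrow> real) \<Rightarrow> 'e set \<Rightarrow> bool" where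
  "dist_bounded_on \<rho> A \<longleftrightarrow> (\<exists>B. \<forall>x\<in>A. \<forall>y\<in>A. \<rho> x y \<le> B)"

definition max_bounded_subspace ::
  "('k::real_normed_div_algebra \<Rightarrow> 'e::ab_group_add \<Rightarrow> 'e) \<Rightarrow> ('e \<Rightarrow> 'e \<Rightarrow> real) \<Rightarrow> 'e set \<Rightarrow> bool" where
  "max_bounded_subspace sm \<rho> S \<longleftrightarrow>
     linear_subspace sm S \<and> dist_bounded_on \<rho> S \<and>
     (\<forall>T. linear_subspace sm T \<and> dist_bounded_on \<rho> T \<longrightarrow> T \<subseteq> S)"

end

theory Submission
  imports Defs
begin

text \<open>Write B for the set of vectors x whose line K x is d-bounded. The lower lipschitz bound
  gives a dichotomy: either d(a x, 0) \<le> C1 C2 for every scalar a, or d(a x, 0) grows at least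
  linearly in |a|. Hence B is a linear subspace on which d is bounded, and it contains every linear
  subspace on which d is bounded. Averaging over the unit sphere preserves both alternatives, so
  the same holds for d0. Finally n \<mapsto> d(n x, 0) and n \<mapsto> d0(n x, 0) are subadditive up to
  the constant C0, so by Fekete's lemma \<delta>(x, 0) and \<delta>0(x, 0) exist; they vanish on B and are
  positive off B.\<close>

lemma subadditive_mult_le:
  fixes a :: "nat \<Rightarrow> real"
  assumes sub: "\<And>m n. a (m + n) \<le> a m + a n"
  shows "a (q * k + r) \<le> real q * a k + a r"
proof (induction q)
  case (Suc q)
  have "a (Suc q * k + r) = a (k + (q * k + r))" by (simp add: add.assoc)
  also have "\<dots> \<le> a k + a (q * k + r)" by (rule sub)
  finally show ?case using Suc by (simp add: algebra_simps)
qed simp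

lemma subadditive_ratio_eventually_less:
  fixes a :: "nat \<Rightarrow> real"
  assumes sub: "\<And>m n. a (m + n) \<le> a m + a n" and nonneg: "\<And>n. 0 \<le> a n"
    and "k \<ge> 1" and "e > 0"
  shows "\<forall>\<^sub>F n in sequentially. a n / real n < a k / real k + e"
proof -
  define M where "M = Max (a ` {..<k})"
  have M: "a r \<le> M" if "r < k" for r
    unfolding M_def using that by (intro Max_ge) auto
  obtain N :: nat where N: "M / e < real N" using reals_Archimedean2 by blast
  have "a n / real n < a k / real k + e" if n: "n \<ge> max 1 N" for n
  proof -
    define q where "q = n div k"
    have n_eq: "n = q * k + n mod k" unfolding q_def by simp
    have "real q * real k \<le> real n"
      using n_eq by (metis of_nat_le_iff of_nat_mult le_add1)
    then have "real q * real k * (a k / real k) \<le> real n * (a k / real k)"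
      using nonneg[of k] by (intro mult_right_mono) auto
    then have "real q * a k \<le> real n * (a k / real k)"
      using \<open>k \<ge> 1\<close> by simp
    moreover have "a n \<le> real q * a k + a (n mod k)"
      using subadditive_mult_le[of a q k "n mod k", OF sub] by (simp add: q_def)
    moreover have "a (n mod k) \<le> M"
      using M \<open>k \<ge> 1\<close> by simp
    moreover have "M < e * real n"
    proof -
      have "M < e * real N"
        using N \<open>e > 0\<close> by (simp add: field_simps)
      also have "\<dots> \<le> e * real n"
        using n \<open>e > 0\<close> by simp
      finally show ?thesis .
    qed
    ultimately have "a n < real n * (a k / real k + e)" by (simp add: algebra_simps)
    then show ?thesis using n by (simp add: field_simps)
  qed
  then show ?thesis by (rule eventually_sequentiallyI)
qed

lemma fekete_subadditive:
  fixes a :: "nat \<Rightarrow> real"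
  assumes sub: "\<And>m n. a (m + n) \<le> a m + a n" and nonneg: "\<And>n. 0 \<le> a n"
  shows "convergent (\<lambda>n. a n / real n)"
proof -
  define L where "L = (INF n\<in>{1..}. a n / real n)"
  have bdd: "bdd_below ((\<lambda>n. a n / real n) ` {1..})"
    by (rule bdd_belowI[of _ 0]) (auto simp: nonneg)
  have "(\<lambda>n. a n / real n) \<longlonglongrightarrow> L"
  proof (rule order_tendstoI)
    fix y assume "y < L"
    have "y < a n / real n" if "n \<ge> 1" for n
      using \<open>y < L\<close> cINF_lower[OF bdd, of n] that by (simp add: L_def)
    then show "\<forall>\<^sub>F n in sequentially. y < a n / real n"
      by (rule eventually_sequentiallyI)
  next
    fix y assume "L < y"
    then obtain k where "k \<ge> 1" "a k / real k < y"
      using cINF_less_iff[OF _ bdd] unfolding L_def by fastforce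
    then show "\<forall>\<^sub>F n in sequentially. a n / real n < y"
      using subadditive_ratio_eventually_less[of a k "y - a k / real k", OF sub nonneg \<open>k \<ge> 1\<close>]
      by simp
  qed
  then show ?thesis by (auto simp: convergent_def)
qed

lemma fekete_quasi_subadditive:
  fixes a :: "nat \<Rightarrow> real"
  assumes "\<And>m n. a (m + n) \<le> a m + C + a n" and "\<And>n. 0 \<le> a n" and "0 \<le> C"
  shows "convergent (\<lambda>n. a n / real n)"
proof -
  have "convergent (\<lambda>n. (a n + C) / real n)"
    by (rule fekete_subadditive) (use assms in \<open>auto simp: algebra_simps\<close>)
  then have "convergent (\<lambda>n. (a n + C) / real n - C / real n)"
    by (rule convergent_diff[OF _ convergentI[OF lim_const_over_n]])
  then show ?thesis by (simp add: add_divide_distrib)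
qed

lemma LIMSEQ_bounded_div_n:
  fixes f :: "nat \<Rightarrow> real"
  assumes "\<And>n. \<bar>f n\<bar> \<le> B"
  shows "(\<lambda>n. f n / real n) \<longlonglongrightarrow> 0"
proof (rule tendsto_sandwich[of "\<lambda>n. - B / real n" _ _ "\<lambda>n. B / real n"])
  have "- B / real n \<le> f n / real n \<and> f n / real n \<le> B / real n" for n
    using assms[of n] divide_right_mono[of "- B" "f n" "real n"] divide_right_mono[of "f n" B "real n"]
    by (simp add: abs_le_iff)
  then show "\<forall>\<^sub>F n in sequentially. - B / real n \<le> f n / real n"
    "\<forall>\<^sub>F n in sequentially. f n / real n \<le> B / real n"
    by simp_all
qed (auto intro: tendsto_eq_intros lim_const_over_n)

lemma lim_div_n_ge:
  fixes f :: "nat \<Rightarrow> real"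
  assumes "convergent (\<lambda>n. f n / real n)" and "\<And>n. real n * \<kappa> - C \<le> f n"
  shows "\<kappa> \<le> lim (\<lambda>n. f n / real n)"
proof (rule LIMSEQ_le)
  show "(\<lambda>n. \<kappa> - C / real n) \<longlonglongrightarrow> \<kappa>"
    using tendsto_diff[OF tendsto_const lim_const_over_n] by simp
  show "(\<lambda>n. f n / real n) \<longlonglongrightarrow> lim (\<lambda>n. f n / real n)"
    using assms(1) by (simp add: convergent_LIMSEQ_iff)
  have "\<kappa> - C / real n \<le> f n / real n" if "n \<ge> 1" for n
  proof -
    have "\<kappa> - C / real n = (real n * \<kappa> - C) / real n"
      using that by (simp add: field_simps)
    also have "\<dots> \<le> f n / real n"
      using assms(2)[of n] by (simp add: divide_right_mono)
    finally show ?thesis .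
  qed
  then show "\<exists>N. \<forall>n\<ge>N. \<kappa> - C / real n \<le> f n / real n" by blast
qed

lemma linear_growth_unbounded:
  assumes "\<kappa> > 0"
  obtains a :: "'k::real_normed_algebra_1" where "M < norm a * \<kappa> - C"
proof
  show "M < norm (of_real ((\<bar>M\<bar> + \<bar>C\<bar> + 1) / \<kappa>) :: 'k) * \<kappa> - C"
    using assms by (simp add: abs_of_pos)
qed

locale lipschitz_metric_vector_space =
  fixes sm :: "'k::real_normed_div_algebra \<Rightarrow> 'e::ab_group_add \<Rightarrow> 'e"
    and d :: "'e \<Rightarrow> 'e \<Rightarrow> real"
    and C0 C1 C2 C3 :: real
  assumes metric_vector_space: "metric_vector_space sm d"
    and translation_invariant: "translation_invariant C0 d"
    and lipschitz_multiplicative: "lipschitz_multiplicative C1 C2 C3 sm d"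
begin

lemma sm_add_right: "sm a (x + y) = sm a x + sm a y"
  and sm_add_left: "sm (a + b) x = sm a x + sm b x"
  and sm_mult: "sm (a * b) x = sm a (sm b x)"
  and sm_one [simp]: "sm 1 x = x"
  using metric_vector_space by (simp_all add: metric_vector_space_def left_vector_space_def)

lemma sm_zero_right [simp]: "sm a 0 = 0"
  using sm_add_right[of a 0 0] by simp

lemma sm_zero_left [simp]: "sm 0 x = 0"
  using sm_add_left[of 0 0 x] by simp

lemma d_nonneg: "0 \<le> d x y"
  and d_self [simp]: "d x x = 0"
  and d_sym: "d x y = d y x"
  and d_triangle: "d x z \<le> d x y + d y z"
  using metric_vector_space by (simp_all add: metric_vector_space_def is_metric_def)

lemma d_translate: "d (x + z) (y + z) \<le> d x y + C0"
  using translation_invariant by (simp add: translation_invariant_def)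

lemma C0_nonneg: "0 \<le> C0"
  using d_translate[of 0 0 0] by simp

lemma d_sm_ge: "d x y * norm a / C1 - C2 * norm a - C3 \<le> d (sm a x) (sm a y)"
  and d_sm_le: "d (sm a x) (sm a y) \<le> C1 * norm a * d x y + C2 * norm a + C3"
  and C1_ge_1: "1 \<le> C1" and C2_nonneg: "0 \<le> C2" and C3_nonneg: "0 \<le> C3"
  using lipschitz_multiplicative by (simp_all add: lipschitz_multiplicative_def)

lemma d_add_0_le: "d (p + q) 0 \<le> d p 0 + C0 + d q 0"
proof -
  have "d (p + q) 0 \<le> d (p + q) (0 + q) + d q 0" using d_triangle by simp
  also have "\<dots> \<le> d p 0 + C0 + d q 0" using d_translate[of p q 0] by simp
  finally show ?thesis .
qed

definition bounded_lines :: "'e set" where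
  "bounded_lines = {x. \<exists>M. \<forall>a. d (sm a x) 0 \<le> M}"

text \<open>Rescaling by a = (a / c) c, a single value d(c x, 0) > C1 C2 propagates to linear growth
  along the whole line.\<close>
lemma linear_growth_if_far:
  assumes far: "C1 * C2 < d (sm c x) 0"
  obtains \<kappa> where "\<kappa> > 0" and "\<And>a. norm a * \<kappa> - C3 \<le> d (sm a x) 0"
proof
  have "0 \<le> C1 * C2"
    using C1_ge_1 C2_nonneg by simp
  then have "c \<noteq> 0"
    using far by auto
  define \<kappa> where "\<kappa> = (d (sm c x) 0 / C1 - C2) / norm c"
  have "C2 < d (sm c x) 0 / C1"
    using far C1_ge_1 by (simp add: field_simps)
  then show "\<kappa> > 0"
    using \<open>c \<noteq> 0\<close> by (simp add: \<kappa>_def)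
  fix a
  have "norm a * \<kappa> = norm (a * inverse c) * (d (sm c x) 0 / C1 - C2)"
    by (simp add: \<kappa>_def norm_mult norm_inverse divide_inverse)
  moreover have "sm a x = sm (a * inverse c) (sm c x)"
    using \<open>c \<noteq> 0\<close> by (simp add: sm_mult[symmetric] mult.assoc)
  ultimately show "norm a * \<kappa> - C3 \<le> d (sm a x) 0"
    using d_sm_ge[of "sm c x" 0 "a * inverse c"] by (simp add: algebra_simps)
qed

lemma bounded_lines_le:
  assumes "x \<in> bounded_lines"
  shows "d (sm a x) 0 \<le> C1 * C2"
proof (rule ccontr)
  obtain M where M: "\<And>b. d (sm b x) 0 \<le> M"
    using assms by (auto simp: bounded_lines_def)
  assume "\<not> ?thesis"
  then have "C1 * C2 < d (sm a x) 0" by simp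
  then obtain \<kappa> where "\<kappa> > 0" and growth: "\<And>b. norm b * \<kappa> - C3 \<le> d (sm b x) 0"
    using linear_growth_if_far by blast
  obtain b :: 'k where "M < norm b * \<kappa> - C3"
    using \<open>\<kappa> > 0\<close> by (rule linear_growth_unbounded)
  then show False
    using growth[of b] M[of b] by simp
qed

lemma linear_growth_outside_bounded_lines:
  assumes "x \<notin> bounded_lines"
  obtains \<kappa> where "\<kappa> > 0" and "\<And>a. norm a * \<kappa> - C3 \<le> d (sm a x) 0"
proof -
  obtain c where "C1 * C2 < d (sm c x) 0"
    using assms by (force simp: bounded_lines_def not_le)
  then show ?thesis
    using linear_growth_if_far that by blast
qed

lemma linear_subspace_bounded_lines: "linear_subspace sm bounded_lines"
  unfolding linear_subspace_def
proof (intro conjI ballI allI)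
  show "0 \<in> bounded_lines"
    by (auto simp: bounded_lines_def)
next
  fix x y assume "x \<in> bounded_lines" "y \<in> bounded_lines"
  then have "d (sm a (x + y)) 0 \<le> C1 * C2 + C0 + C1 * C2" for a
    using d_add_0_le[of "sm a x" "sm a y"] bounded_lines_le[of x a] bounded_lines_le[of y a]
    by (simp add: sm_add_right)
  then show "x + y \<in> bounded_lines"
    by (auto simp: bounded_lines_def)
next
  fix a x assume "x \<in> bounded_lines"
  then show "sm a x \<in> bounded_lines"
    by (auto simp: bounded_lines_def sm_mult[symmetric])
qed

lemma d_diff_le: "\<bar>d x y - d x' y'\<bar> \<le> d x x' + d y y'"
  using d_triangle[of x y x'] d_triangle[of x' y y'] d_triangle[of x' y' x] d_triangle[of x y' y]
    d_sym[of x x'] d_sym[of y y']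
  by (simp add: abs_le_iff)

lemma sm_continuous_scalar:
  assumes "e > 0"
  obtains r where "r > 0" and "\<And>b. norm (a - b) < r \<Longrightarrow> d (sm a z) (sm b z) < e"
proof -
  have "\<forall>a x. \<forall>e>0. \<exists>r>0. \<forall>b x'. norm (a - b) < r \<and> d x x' < r \<longrightarrow> d (sm a x) (sm b x') < e"
    using metric_vector_space by (simp add: metric_vector_space_def)
  then obtain r where "r > 0" and r: "\<And>b. norm (a - b) < r \<and> d z z < r \<Longrightarrow> d (sm a z) (sm b z) < e"
    using assms by meson
  then show ?thesis
    using that by simp
qed

lemma continuous_on_d_sm: "continuous_on A (\<lambda>u. d (sm u x) (sm u y))"
  unfolding continuous_on_iff
proof (intro ballI allI impI)
  fix a e assume "(0::real) < e"
  then have "e / 2 > 0" by simp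
  obtain r1 where "r1 > 0" and r1: "\<And>b. norm (a - b) < r1 \<Longrightarrow> d (sm a x) (sm b x) < e / 2"
    using sm_continuous_scalar[OF \<open>e / 2 > 0\<close>] by blast
  obtain r2 where "r2 > 0" and r2: "\<And>b. norm (a - b) < r2 \<Longrightarrow> d (sm a y) (sm b y) < e / 2"
    using sm_continuous_scalar[OF \<open>e / 2 > 0\<close>] by blast
  have "dist (d (sm b x) (sm b y)) (d (sm a x) (sm a y)) < e" if "dist b a < min r1 r2" for b
  proof -
    have "norm (a - b) < min r1 r2"
      using that by (simp add: dist_norm norm_minus_commute)
    then have "d (sm a x) (sm b x) < e / 2" and "d (sm a y) (sm b y) < e / 2"
      using r1[of b] r2[of b] by auto
    moreover have "\<bar>d (sm b x) (sm b y) - d (sm a x) (sm a y)\<bar> \<le> d (sm a x) (sm b x) + d (sm a y) (sm b y)"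
      using d_diff_le[of "sm b x" "sm b y" "sm a x" "sm a y"]
        d_sym[of "sm b x" "sm a x"] d_sym[of "sm b y" "sm a y"]
      by linarith
    ultimately show ?thesis
      by (simp add: dist_real_def)
  qed
  then show "\<exists>r>0. \<forall>b\<in>A. dist b a < r \<longrightarrow> dist (d (sm b x) (sm b y)) (d (sm a x) (sm a y)) < e"
    using \<open>r1 > 0\<close> \<open>r2 > 0\<close> by (intro exI[of _ "min r1 r2"]) auto
qed

end

text \<open>The only properties of d and d0 that the argument needs.\<close>
locale rotation_controlled = lipschitz_metric_vector_space sm d C0 C1 C2 C3
  for sm :: "'k::real_normed_div_algebra \<Rightarrow> 'e::ab_group_add \<Rightarrow> 'e"
    and d C0 C1 C2 C3 +
  fixes \<rho> :: "'e \<Rightarrow> 'e \<Rightarrow> real"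
  assumes ge_rotated: "(\<And>u. u \<in> unit_sphere \<Longrightarrow> c \<le> d (sm u x) (sm u y)) \<Longrightarrow> c \<le> \<rho> x y"
    and le_rotated: "(\<And>u. u \<in> unit_sphere \<Longrightarrow> d (sm u x) (sm u y) \<le> c) \<Longrightarrow> \<rho> x y \<le> c"
    and add_0_le: "\<rho> (p + q) 0 \<le> \<rho> p 0 + C0 + \<rho> q 0"
begin

lemma nonneg: "0 \<le> \<rho> x y"
  by (rule ge_rotated) (rule d_nonneg)

lemma linear_growth:
  assumes "\<And>b. norm b * \<kappa> - C3 \<le> d (sm b x) 0"
  shows "norm a * \<kappa> - C3 \<le> \<rho> (sm a x) 0"
proof (rule ge_rotated)
  fix u :: 'k assume "u \<in> unit_sphere"
  then show "norm a * \<kappa> - C3 \<le> d (sm u (sm a x)) (sm u 0)"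
    using assms[of "u * a"] by (simp add: sm_mult norm_mult unit_sphere_def)
qed

lemma le_on_bounded_lines:
  assumes "x \<in> bounded_lines" and "y \<in> bounded_lines"
  shows "\<rho> x y \<le> 2 * (C1 * C2)"
proof (rule le_rotated)
  fix u
  have "d (sm u x) (sm u y) \<le> d (sm u x) 0 + d 0 (sm u y)"
    by (rule d_triangle)
  then show "d (sm u x) (sm u y) \<le> 2 * (C1 * C2)"
    using bounded_lines_le[OF assms(1), of u] bounded_lines_le[OF assms(2), of u] d_sym[of 0]
    by simp
qed

lemma asymp_dist_eq_0_iff: "asymp_dist sm \<rho> x 0 = 0 \<longleftrightarrow> x \<in> bounded_lines"
proof
  assume "x \<in> bounded_lines"
  then have "\<bar>\<rho> (sm (of_nat n) x) 0\<bar> \<le> 2 * (C1 * C2)" for n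
    using le_on_bounded_lines[of "sm (of_nat n) x" 0] nonneg linear_subspace_bounded_lines
    by (simp add: linear_subspace_def)
  then have "(\<lambda>n. \<rho> (sm (of_nat n) x) 0 / real n) \<longlonglongrightarrow> 0"
    by (rule LIMSEQ_bounded_div_n)
  then show "asymp_dist sm \<rho> x 0 = 0"
    unfolding asymp_dist_def by (simp add: limI)
next
  assume lim_0: "asymp_dist sm \<rho> x 0 = 0"
  show "x \<in> bounded_lines"
  proof (rule ccontr)
    assume "x \<notin> bounded_lines"
    then obtain \<kappa> where "\<kappa> > 0" and growth: "\<And>a. norm a * \<kappa> - C3 \<le> d (sm a x) 0"
      using linear_growth_outside_bounded_lines by blast
    have "convergent (\<lambda>n. \<rho> (sm (of_nat n) x) 0 / real n)"
      by (rule fekete_quasi_subadditive[OF _ nonneg C0_nonneg])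
        (simp add: sm_add_left add_0_le)
    moreover have "real n * \<kappa> - C3 \<le> \<rho> (sm (of_nat n) x) 0" for n
      using linear_growth[OF growth, of "of_nat n"] by simp
    ultimately have "\<kappa> \<le> lim (\<lambda>n. \<rho> (sm (of_nat n) x) 0 / real n)"
      by (rule lim_div_n_ge)
    then show False
      using lim_0 \<open>\<kappa> > 0\<close> by (simp add: asymp_dist_def)
  qed
qed

lemma max_bounded_subspace_bounded_lines: "max_bounded_subspace sm \<rho> bounded_lines"
  unfolding max_bounded_subspace_def
proof (intro conjI allI impI subsetI linear_subspace_bounded_lines)
  show "dist_bounded_on \<rho> bounded_lines"
    unfolding dist_bounded_on_def using le_on_bounded_lines by blast
  fix T x assume T: "linear_subspace sm T \<and> dist_bounded_on \<rho> T" and "x \<in> T"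
  then obtain M where "\<forall>y\<in>T. \<forall>z\<in>T. \<rho> y z \<le> M"
    by (auto simp: dist_bounded_on_def)
  moreover have "sm a x \<in> T" and "0 \<in> T" for a
    using T \<open>x \<in> T\<close> by (auto simp: linear_subspace_def)
  ultimately have M: "\<rho> (sm a x) 0 \<le> M" for a
    by blast
  show "x \<in> bounded_lines"
  proof (rule ccontr)
    assume "x \<notin> bounded_lines"
    then obtain \<kappa> where "\<kappa> > 0" and growth: "\<And>a. norm a * \<kappa> - C3 \<le> d (sm a x) 0"
      using linear_growth_outside_bounded_lines by blast
    obtain a :: 'k where "M < norm a * \<kappa> - C3"
      using \<open>\<kappa> > 0\<close> by (rule linear_growth_unbounded)
    then show False
      using linear_growth[OF growth, of a] M[of a] by simp
  qed
qed

end

lemma (in lipschitz_metric_vector_space) rotation_controlled_d: "rotation_controlled sm d C0 C1 C2 C3 d"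
proof (intro rotation_controlled.intro lipschitz_metric_vector_space_axioms rotation_controlled_axioms.intro)
  have "(1::'k) \<in> unit_sphere"
    by (simp add: unit_sphere_def)
  then show "c \<le> d x y" if "\<And>u. u \<in> unit_sphere \<Longrightarrow> c \<le> d (sm u x) (sm u y)" for c x y
    using that[of 1] by simp
  show "d x y \<le> c" if "\<And>u. u \<in> unit_sphere \<Longrightarrow> d (sm u x) (sm u y) \<le> c" for c x y
    using that[of 1] \<open>1 \<in> unit_sphere\<close> by simp
  show "d (p + q) 0 \<le> d p 0 + C0 + d q 0" for p q
    by (rule d_add_0_le)
qed

locale sphere_average = lipschitz_metric_vector_space sm d C0 C1 C2 C3
  for sm :: "'k::{real_normed_div_algebra, euclidean_space} \<Rightarrow> 'e::ab_group_add \<Rightarrow> 'e"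
    and d C0 C1 C2 C3 +
  fixes \<mu> :: "'k measure"
  assumes prob: "prob_space \<mu>"
    and space_eq: "space \<mu> = unit_sphere"
    and sets_eq: "sets \<mu> = sets (restrict_space borel unit_sphere)"
begin

lemma integrable_d_sm: "integrable \<mu> (\<lambda>u. d (sm u x) (sm u y))"
proof -
  interpret prob_space \<mu>
    by (rule prob)
  have "(\<lambda>u. d (sm u x) (sm u y)) \<in> borel_measurable \<mu>"
    by (subst measurable_cong_sets[OF sets_eq refl])
      (rule borel_measurable_continuous_on_restrict[OF continuous_on_d_sm])
  moreover have "norm (d (sm u x) (sm u y)) \<le> C1 * d x y + C2 + C3" if "u \<in> space \<mu>" for u
    using that d_sm_le[of u x y] d_nonneg[of "sm u x"] by (simp add: space_eq unit_sphere_def)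
  ultimately show ?thesis
    by (intro integrable_const_bound AE_I2)
qed

lemma avg_dist_add_0_le: "avg_dist \<mu> sm d (p + q) 0 \<le> avg_dist \<mu> sm d p 0 + C0 + avg_dist \<mu> sm d q 0"
proof -
  interpret prob_space \<mu>
    by (rule prob)
  have "avg_dist \<mu> sm d (p + q) 0 \<le> (\<integral>u. d (sm u p) 0 + C0 + d (sm u q) 0 \<partial>\<mu>)"
    unfolding avg_dist_def using integrable_d_sm[of p 0] integrable_d_sm[of q 0]
    by (intro integral_mono integrable_d_sm) (auto simp: sm_add_right d_add_0_le)
  also have "\<dots> = avg_dist \<mu> sm d p 0 + C0 + avg_dist \<mu> sm d q 0"
    unfolding avg_dist_def using integrable_d_sm[of p 0] integrable_d_sm[of q 0]
    by (simp add: prob_space)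
  finally show ?thesis .
qed

lemma avg_dist_ge_rotated:
  assumes "\<And>u. u \<in> unit_sphere \<Longrightarrow> c \<le> d (sm u x) (sm u y)"
  shows "c \<le> avg_dist \<mu> sm d x y"
proof -
  have "AE u in \<mu>. c \<le> d (sm u x) (sm u y)"
    using assms by (intro AE_I2) (simp add: space_eq)
  then show ?thesis
    unfolding avg_dist_def by (rule prob_space.integral_ge_const[OF prob integrable_d_sm])
qed

lemma avg_dist_le_rotated:
  assumes "\<And>u. u \<in> unit_sphere \<Longrightarrow> d (sm u x) (sm u y) \<le> c"
  shows "avg_dist \<mu> sm d x y \<le> c"
proof -
  have "AE u in \<mu>. d (sm u x) (sm u y) \<le> c"
    using assms by (intro AE_I2) (simp add: space_eq)
  then show ?thesis
    unfolding avg_dist_def by (rule prob_space.integral_le_const[OF prob integrable_d_sm])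
qed

lemma rotation_controlled_avg_dist: "rotation_controlled sm d C0 C1 C2 C3 (avg_dist \<mu> sm d)"
  by (intro rotation_controlled.intro lipschitz_metric_vector_space_axioms
      rotation_controlled_axioms.intro avg_dist_ge_rotated avg_dist_le_rotated avg_dist_add_0_le)

end

theorem proposition4:
  fixes sm :: "'k::{real_normed_div_algebra, euclidean_space} \<Rightarrow> 'e::ab_group_add \<Rightarrow> 'e"
    and d :: "'e \<Rightarrow> 'e \<Rightarrow> real"
    and \<mu> :: "'k measure"
    and C0 C1 C2 C3 :: real
  assumes "metric_vector_space sm d"
    and "translation_invariant C0 d"
    and "lipschitz_multiplicative C1 C2 C3 sm d"
    and "right_haar_prob \<mu>"
  defines "d0 \<equiv> avg_dist \<mu> sm d"
    and "\<delta> \<equiv> asymp_dist sm d"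
    and "\<delta>0 \<equiv> asymp_dist sm (avg_dist \<mu> sm d)"
  defines "E0 \<equiv> {x. \<forall>u\<in>unit_sphere. \<delta> (sm u x) 0 = 0}"
    and "E1 \<equiv> {x. \<delta>0 x 0 = 0}"
  shows "E0 = E1 \<and> max_bounded_subspace sm d0 E1 \<and> max_bounded_subspace sm d E1"
proof -
  interpret sphere_average sm d C0 C1 C2 C3 \<mu>
    using assms(1-4)
    by (intro sphere_average.intro lipschitz_metric_vector_space.intro sphere_average_axioms.intro)
      (simp_all add: right_haar_prob_def)
  interpret dist: rotation_controlled sm d C0 C1 C2 C3 d
    by (rule rotation_controlled_d)
  interpret avg: rotation_controlled sm d C0 C1 C2 C3 d0
    unfolding d0_def by (rule rotation_controlled_avg_dist)
  have "(1::'k) \<in> unit_sphere"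
    by (simp add: unit_sphere_def)
  then have "E0 = bounded_lines"
    using linear_subspace_bounded_lines
    by (auto simp: E0_def \<delta>_def dist.asymp_dist_eq_0_iff linear_subspace_def)
  moreover have "E1 = bounded_lines"
    by (auto simp: E1_def \<delta>0_def avg.asymp_dist_eq_0_iff[unfolded d0_def])
  ultimately show ?thesis
    using dist.max_bounded_subspace_bounded_lines avg.max_bounded_subspace_bounded_lines by simp
qed

end
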